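(* Let $\mathcal P$ be a non-empty family of subsets of a set $X$ which is closed under finite intersections and satisfies $\mathcal P\subseteq\mathcal P_{seq}$. Then the $\mathcal Q_{\mathcal P}$-topology on $X/\mathcal P$ is regular.
   Context: $[x]_{\mathcal P}=\{y\in X:\forall V\in\mathcal P\ (x\in V\iff y\in V)\}$, $X/\mathcal P=\{[x]_{\mathcal P}:x\in X\}$, $q(x)=[x]_{\mathcal P}$, and the $\mathcal Q_{\mathcal P}$-topology is the coarsest topology on $X/\mathcal P$ containing all sets $q[V]$, $V\in\mathcal P$. $\mathcal P_{seq}$ is the family of all sets $W$ for which there exist $\{U_n\}_{n\in\omega},\{V_n\}_{n\in\omega}\subseteq\mathcal P$ with $U_k\subseteq X\setminus V_k\subseteq U_{k+1}$ for every $k$ and $\bigcup_nU_n=W$. Regular spaces are assumed $T_1$. *)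

theory Defs
  imports "HOL-Analysis.Analysis"
begin

definition pclass :: "'a set \<Rightarrow> 'a set set \<Rightarrow> 'a \<Rightarrow> 'a set" where
  "pclass X P x = {y \<in> X. \<forall>V\<in>P. (x \<in> V \<longleftrightarrow> y \<in> V)}"

definition pquot :: "'a set \<Rightarrow> 'a set set \<Rightarrow> 'a set set" where
  "pquot X P = pclass X P ` X"

text \<open>Coarsest topology on X/P containing all q[V], V in P (the whole space
  X/P is added to the subbase so that the carrier is exactly X/P).\<close>
definition QP_topology :: "'a set \<Rightarrow> 'a set set \<Rightarrow> 'a set topology" where
  "QP_topology X P =
     topology_generated_by (insert (pquot X P) {pclass X P ` V | V. V \<in> P})"

definition P_seq :: "'a set \<Rightarrow> 'a set set \<Rightarrow> 'a set set" where
  "P_seq X P = {W. \<exists>U V. (\<forall>n. U n \<in> P \<and> V n \<in> P) \<and>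
       (\<forall>k. U k \<subseteq> X - V k \<and> X - V k \<subseteq> U (Suc k)) \<and> (\<Union>n. U n) = W}"

end

theory Submission
  imports Defs
begin

text \<open>Every member of \<open>\<P>\<close> is a union of classes, so the images \<open>q[V]\<close> intersect like the
  sets \<open>V\<close> themselves; together with the whole space they are therefore closed under finite
  intersections and form a base of the \<open>\<Q>\<^sub>\<P>\<close>-topology. For \<open>x \<in> V \<in> \<P> \<subseteq> \<P>\<^sub>s\<^sub>e\<^sub>q\<close>, the
  sequences witnessing \<open>V \<in> \<P>\<^sub>s\<^sub>e\<^sub>q\<close> give disjoint \<open>A = U\<^sub>n \<ni> x\<close> and \<open>B = V\<^sub>n \<supseteq> X - V\<close> in \<open>\<P>\<close>.
  Their images separate \<open>q(x)\<close> from any closed set missing the basic neighbourhood \<open>q[V]\<close>,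
  and, applied to a \<open>V\<close> containing just one of two points, they separate the two classes
  in the other direction as well.\<close>

lemma pclass_in_image_iff:
  assumes "y \<in> X" "A \<in> P"
  shows "pclass X P y \<in> pclass X P ` A \<longleftrightarrow> y \<in> A"
proof
  assume "pclass X P y \<in> pclass X P ` A"
  then obtain a where a: "a \<in> A" "pclass X P y = pclass X P a" by auto
  have "y \<in> pclass X P a" using a(2) assms(1) unfolding pclass_def by auto
  then show "y \<in> A" using a(1) assms(2) unfolding pclass_def by auto
qed auto

lemma pclass_image_Int:
  assumes "A \<in> P" "B \<subseteq> X"
  shows "pclass X P ` (A \<inter> B) = pclass X P ` A \<inter> pclass X P ` B"
proof
  show "pclass X P ` A \<inter> pclass X P ` B \<subseteq> pclass X P ` (A \<inter> B)"
  proof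
    fix c assume "c \<in> pclass X P ` A \<inter> pclass X P ` B"
    then obtain b where b: "b \<in> B" "c = pclass X P b" "c \<in> pclass X P ` A" by auto
    then have "b \<in> A" using pclass_in_image_iff[OF _ assms(1)] assms(2) by blast
    then show "c \<in> pclass X P ` (A \<inter> B)" using b by blast
  qed
qed auto

lemma P_seq_separating_pair:
  assumes "W \<in> P_seq X P" "x \<in> W"
  obtains A B where "A \<in> P" "B \<in> P" "x \<in> A" "X - W \<subseteq> B" "A \<inter> B = {}"
proof -
  obtain U V where UV: "\<forall>n. U n \<in> P \<and> V n \<in> P"
    "\<forall>k. U k \<subseteq> X - V k \<and> X - V k \<subseteq> U (Suc k)" "(\<Union>n. U n) = W"
    using assms(1) unfolding P_seq_def by blast
  obtain n where "x \<in> U n" using UV(3) assms(2) by blast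
  moreover have "X - W \<subseteq> V n" using UV(2,3) by blast
  moreover have "U n \<inter> V n = {}" using UV(2) by blast
  ultimately show thesis using that UV(1) by blast
qed

lemma topspace_QP_topology:
  assumes "\<forall>V\<in>P. V \<subseteq> X"
  shows "topspace (QP_topology X P) = pquot X P"
  using assms unfolding QP_topology_def pquot_def by auto

lemma openin_QP_topology_image:
  assumes "V \<in> P"
  shows "openin (QP_topology X P) (pclass X P ` V)"
  unfolding QP_topology_def using assms by (intro topology_generated_by_Basis) auto

lemma generate_topology_on_Int_closed_base:
  assumes "\<And>b c. b \<in> \<B> \<Longrightarrow> c \<in> \<B> \<Longrightarrow> b \<inter> c \<in> \<B>"
    and "generate_topology_on \<B> S" "a \<in> S"
  shows "\<exists>b\<in>\<B>. a \<in> b \<and> b \<subseteq> S"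
  using assms(2,3)
proof (induction arbitrary: a rule: generate_topology_on.induct)
  case Empty
  then show ?case by simp
next
  case (Int S1 S2)
  then have "a \<in> S1" "a \<in> S2" by simp_all
  then obtain b c where b: "b \<in> \<B>" "a \<in> b" "b \<subseteq> S1" and c: "c \<in> \<B>" "a \<in> c" "c \<subseteq> S2"
    using Int.IH by meson
  show ?case
    using assms(1)[OF b(1) c(1)] b c by (intro bexI[of _ "b \<inter> c"]) auto
next
  case (UN K)
  then obtain k where "k \<in> K" "a \<in> k" by blast
  then obtain b where "b \<in> \<B>" "a \<in> b" "b \<subseteq> k" using UN.IH by meson
  then show ?case using \<open>k \<in> K\<close> by blast
next
  case (Basis s)
  then show ?case by blast
qed

lemma QP_subbase_Int_closed:
  assumes sub: "\<forall>V\<in>P. V \<subseteq> X"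
    and int: "\<forall>V\<in>P. \<forall>W\<in>P. V \<inter> W \<in> P"
    and b: "b \<in> insert (pquot X P) {pclass X P ` V | V. V \<in> P}"
    and c: "c \<in> insert (pquot X P) {pclass X P ` V | V. V \<in> P}"
  shows "b \<inter> c \<in> insert (pquot X P) {pclass X P ` V | V. V \<in> P}"
proof -
  have image_sub: "pclass X P ` V \<subseteq> pquot X P" if "V \<in> P" for V
    using sub that unfolding pquot_def by (simp add: image_mono)
  have image_Int: "pclass X P ` V \<inter> pclass X P ` W = pclass X P ` (V \<inter> W)"
    if "V \<in> P" "W \<in> P" for V W
    using pclass_image_Int[of V P W X] sub that by simp
  have image_Int_mem: "pclass X P ` V \<inter> pclass X P ` W \<in> {pclass X P ` U | U. U \<in> P}"
    if "V \<in> P" "W \<in> P" for V W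
  proof -
    have "V \<inter> W \<in> P" using int that by blast
    then show ?thesis unfolding image_Int[OF that] by blast
  qed
  consider "b = pquot X P" | "c = pquot X P"
    | V W where "V \<in> P" "W \<in> P" "b = pclass X P ` V" "c = pclass X P ` W"
    using b c by (elim insertE CollectE exE conjE) simp_all
  then show ?thesis
  proof cases
    case 1
    then have "b \<inter> c = c" using c image_sub unfolding pquot_def by auto
    then show ?thesis using c by simp
  next
    case 2
    then have "b \<inter> c = b" using b image_sub unfolding pquot_def by auto
    then show ?thesis using b by simp
  next
    case (3 V W)
    then show ?thesis using image_Int_mem by simp
  qed
qed

lemma QP_topology_neighbourhood_base:
  assumes sub: "\<forall>V\<in>P. V \<subseteq> X"
    and int: "\<forall>V\<in>P. \<forall>W\<in>P. V \<inter> W \<in> P"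
    and "openin (QP_topology X P) S" "a \<in> S"
  shows "pquot X P \<subseteq> S \<or> (\<exists>V\<in>P. a \<in> pclass X P ` V \<and> pclass X P ` V \<subseteq> S)"
proof -
  have "generate_topology_on (insert (pquot X P) {pclass X P ` V | V. V \<in> P}) S"
    using assms(3) unfolding QP_topology_def by (rule openin_topology_generated_by)
  from generate_topology_on_Int_closed_base[OF QP_subbase_Int_closed[OF sub int] this \<open>a \<in> S\<close>]
  show ?thesis by blast
qed

lemma QP_topology_distinct_classes:
  assumes "P \<subseteq> P_seq X P" "x \<in> X" "y \<in> X" "pclass X P x \<noteq> pclass X P y"
  shows "\<exists>A\<in>P. x \<in> A \<and> y \<notin> A"
proof -
  have "\<exists>V\<in>P. \<not> (x \<in> V \<longleftrightarrow> y \<in> V)"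
  proof (rule ccontr)
    assume "\<not> ?thesis"
    then have "pclass X P x = pclass X P y" unfolding pclass_def by auto
    with assms(4) show False by contradiction
  qed
  then obtain V where V: "V \<in> P" "x \<in> V \<longleftrightarrow> y \<notin> V" by blast
  show ?thesis
  proof (cases "x \<in> V")
    case False
    then have "y \<in> V" using V(2) by blast
    obtain A B where "A \<in> P" "B \<in> P" "y \<in> A" "X - V \<subseteq> B" "A \<inter> B = {}"
      by (rule P_seq_separating_pair[OF subsetD[OF assms(1) V(1)] \<open>y \<in> V\<close>])
    then show ?thesis using False assms(2) by blast
  qed (use V in blast)
qed

lemma t1_space_QP_topology:
  assumes "\<forall>V\<in>P. V \<subseteq> X" "P \<subseteq> P_seq X P"
  shows "t1_space (QP_topology X P)"
  unfolding t1_space_def topspace_QP_topology[OF assms(1)]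
proof (intro ballI impI)
  fix a b assume "a \<in> pquot X P" "b \<in> pquot X P" "a \<noteq> b"
  then obtain x y where xy: "x \<in> X" "y \<in> X" "a = pclass X P x" "b = pclass X P y"
    unfolding pquot_def by auto
  then obtain A where A: "A \<in> P" "x \<in> A" "y \<notin> A"
    using QP_topology_distinct_classes[OF assms(2) xy(1,2)] \<open>a \<noteq> b\<close> by auto
  have "a \<in> pclass X P ` A" "b \<notin> pclass X P ` A"
    using A xy pclass_in_image_iff[OF xy(2) A(1)] by auto
  then show "\<exists>U. openin (QP_topology X P) U \<and> a \<in> U \<and> b \<notin> U"
    using openin_QP_topology_image[OF A(1)] by blast
qed

lemma regular_space_QP_topology:
  assumes sub: "\<forall>V\<in>P. V \<subseteq> X"
    and int: "\<forall>V\<in>P. \<forall>W\<in>P. V \<inter> W \<in> P"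
    and seq: "P \<subseteq> P_seq X P"
  shows "regular_space (QP_topology X P)"
  unfolding regular_space_def
proof (intro allI impI, elim conjE)
  let ?T = "QP_topology X P" and ?q = "pclass X P"
  fix C a assume C: "closedin ?T C" and a: "a \<in> topspace ?T - C"
  have C_sub: "C \<subseteq> pquot X P"
    using closedin_subset[OF C] topspace_QP_topology[OF sub] by simp
  have "openin ?T (topspace ?T - C)" using C unfolding closedin_def by simp
  from QP_topology_neighbourhood_base[OF sub int this a]
  show "\<exists>U V. openin ?T U \<and> openin ?T V \<and> a \<in> U \<and> C \<subseteq> V \<and> disjnt U V"
  proof (elim disjE bexE conjE)
    assume "pquot X P \<subseteq> topspace ?T - C"
    then have "C = {}" using C_sub by blast
    then show ?thesis using a by (intro exI[of _ "topspace ?T"] exI[of _ "{}"]) auto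
  next
    fix V assume V: "V \<in> P" "a \<in> ?q ` V" "?q ` V \<subseteq> topspace ?T - C"
    then obtain x where x: "x \<in> V" "a = ?q x" by blast
    obtain A B where AB: "A \<in> P" "B \<in> P" "x \<in> A" "X - V \<subseteq> B" "A \<inter> B = {}"
      by (rule P_seq_separating_pair[OF subsetD[OF seq V(1)] x(1)])
    have "C \<subseteq> ?q ` B"
    proof
      fix c assume c: "c \<in> C"
      then obtain z where z: "z \<in> X" "c = ?q z" using C_sub unfolding pquot_def by auto
      then have "z \<notin> V" using V(3) c by blast
      then show "c \<in> ?q ` B" using z AB(4) by blast
    qed
    moreover have "?q ` A \<inter> ?q ` B = {}"
      using pclass_image_Int[OF AB(1), of B X] sub AB(2,5) by simp
    ultimately show ?thesis
      using openin_QP_topology_image[OF AB(1)] openin_QP_topology_image[OF AB(2)] AB(3) x(2)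
      by (intro exI[of _ "?q ` A"] exI[of _ "?q ` B"]) (auto simp: disjnt_def)
  qed
qed

theorem lemma4:
  fixes X :: "'a set" and P :: "'a set set"
  assumes "\<forall>V\<in>P. V \<subseteq> X"
    and "P \<noteq> {}"
    and "\<forall>V\<in>P. \<forall>W\<in>P. V \<inter> W \<in> P"
    and "P \<subseteq> P_seq X P"
  shows "regular_space (QP_topology X P) \<and> t1_space (QP_topology X P)"
  using regular_space_QP_topology[OF assms(1,3,4)] t1_space_QP_topology[OF assms(1,4)] by blast

end
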